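(* Let $F$ be an SCF on $n$ voters and $m\ge 3$ alternatives, and let $G$ be the GSWF defined from $F$ as follows: for alternatives $a\ne b$ and profile $x$, $G^{a,b}(x)=1$ if $\Pr_{x'}[F(x')=a\mid x'^{a,b}=x^{a,b}]>\Pr_{x'}[F(x')=b\mid x'^{a,b}=x^{a,b}]$, $G^{a,b}(x)=0$ if the reverse strict inequality holds, and in case of equality $G^{a,b}(x)$ equals the preference of a fixed voter between $a$ and $b$. Let $N^{a,b}(F)$ be the probability over a uniform profile $x$ that either $F(x)=a$ and $G^{a,b}(x)=0$, or $F(x)=b$ and $G^{a,b}(x)=1$. Then for every pair of distinct alternatives $a,b$, \[ M^{a,b}(F)\ge \big(N^{a,b}(F)\big)^2. \]
   Context: Profiles $x,x'\in(L_m)^n$ are uniformly random ($L_m$ the linear orders on $m$ alternatives). $x^{a,b}\in\{0,1\}^n$ has $x^{a,b}_i=1$ iff voter $i$ ranks $a$ above $b$. $M^{a,b}(F)=\Pr[F(x)=a,\ F(x')=b]$ with $x,x'$ uniform subject to $x^{a,b}=x'^{a,b}$. *)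

theory Defs
  imports Complex_Main "HOL-Combinatorics.Multiset_Permutations"
begin

text \<open>Alternatives are 0..m-1, voters are 0..n-1. A linear order on the alternatives
is a list enumerating them from top (position 0) to bottom.\<close>

definition linorders :: "nat \<Rightarrow> nat list set" where
  "linorders m = permutations_of_set {..<m}"

definition ranks_above :: "nat list \<Rightarrow> nat \<Rightarrow> nat \<Rightarrow> bool" where
  "ranks_above r a b \<longleftrightarrow> (\<exists>i j. i < j \<and> j < length r \<and> r ! i = a \<and> r ! j = b)"

definition profiles :: "nat \<Rightarrow> nat \<Rightarrow> (nat \<Rightarrow> nat list) set" where
  "profiles n m = PiE {..<n} (\<lambda>_. linorders m)"

definition pairvec :: "nat \<Rightarrow> (nat \<Rightarrow> nat list) \<Rightarrow> nat \<Rightarrow> nat \<Rightarrow> (nat \<Rightarrow> bool)" where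
  "pairvec n x a b = (\<lambda>i. if i < n then ranks_above (x i) a b else False)"

definition cond_prob :: "nat \<Rightarrow> nat \<Rightarrow> ((nat \<Rightarrow> nat list) \<Rightarrow> nat) \<Rightarrow> nat \<Rightarrow> nat
    \<Rightarrow> (nat \<Rightarrow> nat list) \<Rightarrow> nat \<Rightarrow> real" where
  "cond_prob n m F a b x c =
     real (card {x' \<in> profiles n m. pairvec n x' a b = pairvec n x a b \<and> F x' = c})
     / real (card {x' \<in> profiles n m. pairvec n x' a b = pairvec n x a b})"

text \<open>The GSWF G^{a,b} derived from F (True = 1, False = 0); ties broken by voter v.\<close>
definition GSWF :: "nat \<Rightarrow> nat \<Rightarrow> nat \<Rightarrow> ((nat \<Rightarrow> nat list) \<Rightarrow> nat) \<Rightarrow> nat \<Rightarrow> nat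
    \<Rightarrow> (nat \<Rightarrow> nat list) \<Rightarrow> bool" where
  "GSWF n m v F a b x =
     (if cond_prob n m F a b x a > cond_prob n m F a b x b then True
      else if cond_prob n m F a b x a < cond_prob n m F a b x b then False
      else ranks_above (x v) a b)"

definition N_ab :: "nat \<Rightarrow> nat \<Rightarrow> nat \<Rightarrow> ((nat \<Rightarrow> nat list) \<Rightarrow> nat) \<Rightarrow> nat \<Rightarrow> nat \<Rightarrow> real" where
  "N_ab n m v F a b =
     real (card {x \<in> profiles n m. (F x = a \<and> \<not> GSWF n m v F a b x) \<or> (F x = b \<and> GSWF n m v F a b x)})
     / real (card (profiles n m))"

text \<open>M^{a,b}(F): (x,x') uniform among pairs of profiles with x^{a,b} = x'^{a,b}.\<close>
definition M_ab :: "nat \<Rightarrow> nat \<Rightarrow> ((nat \<Rightarrow> nat list) \<Rightarrow> nat) \<Rightarrow> nat \<Rightarrow> nat \<Rightarrow> real" where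
  "M_ab n m F a b =
     real (card {(x, x'). x \<in> profiles n m \<and> x' \<in> profiles n m \<and>
                   pairvec n x a b = pairvec n x' a b \<and> F x = a \<and> F x' = b})
     / real (card {(x, x'). x \<in> profiles n m \<and> x' \<in> profiles n m \<and>
                   pairvec n x a b = pairvec n x' a b})"

end

theory Submission
  imports Defs "HOL-Analysis.Convex" "HOL-Combinatorics.Transposition"
begin

text \<open>
  Group the profiles into classes according to their pairwise
  pattern z = x^{a,b}.  Swapping a and b inside a ranking is a bijection between
  the rankings with a above b and those with b above a, so every class has the
  same size K = c^n, where c is the number of rankings with a above b.
  Writing A z and B z for the number of profiles in class z with winner a resp. b:

  \<^item> the conditional probabilities are A z / K and B z / K, so G^{a,b} is constant
    on each class, and inside class z the event counted by N^{a,b}(F) has exactly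
    min (A z) (B z) elements; hence N = (\<Sum>z. min (A z) (B z)) / (|Z| K);
  \<^item> the pairs counted by M^{a,b}(F) lie in a common class, hence
    M = (\<Sum>z. A z * B z) / (|Z| K^2).

  The theorem then follows from Cauchy-Schwarz together with min(A,B)^2 \<le> A B.
\<close>

lemma card_filter_by_fibres:
  assumes "finite X"
  shows "card {x \<in> X. Q x} = (\<Sum>z\<in>f ` X. card {x \<in> X. f x = z \<and> Q x})"
proof -
  have "{x \<in> X. Q x} = (\<Union>z\<in>f ` X. {x \<in> X. f x = z \<and> Q x})"
    by auto
  also have "card \<dots> = (\<Sum>z\<in>f ` X. card {x \<in> X. f x = z \<and> Q x})"
    using assms by (intro card_UN_disjoint) auto
  finally show ?thesis .
qed

lemma card_pairs_in_common_fibre: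
  assumes "finite X"
  shows "card {(x, y). x \<in> X \<and> y \<in> X \<and> f x = f y \<and> p x \<and> q y}
       = (\<Sum>z\<in>f ` X. card {x \<in> X. f x = z \<and> p x} * card {y \<in> X. f y = z \<and> q y})"
proof -
  have "{(x, y). x \<in> X \<and> y \<in> X \<and> f x = f y \<and> p x \<and> q y}
      = (\<Union>z\<in>f ` X. {x \<in> X. f x = z \<and> p x} \<times> {y \<in> X. f y = z \<and> q y})"
    by auto
  also have "card \<dots> = (\<Sum>z\<in>f ` X. card ({x \<in> X. f x = z \<and> p x} \<times> {y \<in> X. f y = z \<and> q y}))"
    using assms by (intro card_UN_disjoint) auto
  finally show ?thesis
    by (simp add: card_cartesian_product)
qed

text \<open>The inequality behind the theorem: by Cauchy-Schwarz and min(A,B)^2 \<le> A B,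
  (\<Sum> min (A z) (B z))^2 \<le> |Z| \<Sum> A z B z.\<close>
lemma sum_min_squared_le:
  fixes A B :: "'a \<Rightarrow> nat"
  shows "(\<Sum>z\<in>Z. real (min (A z) (B z)))\<^sup>2 \<le> real (card Z) * (\<Sum>z\<in>Z. real (A z * B z))"
proof -
  have min_sq: "(real (min (A z) (B z)))\<^sup>2 \<le> real (A z * B z)" for z
  proof -
    have "min (A z) (B z) * min (A z) (B z) \<le> A z * B z"
      by (rule mult_mono) auto
    then show ?thesis
      by (simp add: power2_eq_square flip: of_nat_mult)
  qed
  have "(\<Sum>z\<in>Z. real (min (A z) (B z)))\<^sup>2 \<le> (\<Sum>z\<in>Z. (real (min (A z) (B z)))\<^sup>2) * card Z"
    by (rule sum_squared_le_sum_of_squares)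
  also have "\<dots> \<le> (\<Sum>z\<in>Z. real (A z * B z)) * card Z"
    by (intro mult_right_mono sum_mono min_sq) simp
  finally show ?thesis
    by (simp add: mult.commute)
qed

lemma ranks_above_flip:
  assumes "distinct r" "a \<in> set r" "b \<in> set r" "a \<noteq> b"
  shows "ranks_above r b a \<longleftrightarrow> \<not> ranks_above r a b"
proof -
  obtain i where i: "i < length r" "r ! i = a"
    using assms(2) by (auto simp: in_set_conv_nth)
  obtain j where j: "j < length r" "r ! j = b"
    using assms(3) by (auto simp: in_set_conv_nth)
  have pos_unique: "\<And>k l. k < length r \<Longrightarrow> l < length r \<Longrightarrow> r ! k = r ! l \<Longrightarrow> k = l"
    using assms(1) nth_eq_iff_index_eq by blast
  have "ranks_above r a b \<longleftrightarrow> i < j" "ranks_above r b a \<longleftrightarrow> j < i"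
    unfolding ranks_above_def using i j pos_unique by (metis order.strict_trans)+
  moreover have "i \<noteq> j"
    using i j assms(4) by auto
  ultimately show ?thesis
    by auto
qed

lemma ranks_above_transpose:
  assumes "a \<noteq> b"
  shows "ranks_above (map (transpose a b) r) a b \<longleftrightarrow> ranks_above r b a"
proof -
  have to_a: "\<And>x. transpose a b x = a \<longleftrightarrow> x = b"
    and to_b: "\<And>x. transpose a b x = b \<longleftrightarrow> x = a"
    using assms by (auto simp: transpose_eq_iff)
  show ?thesis
    unfolding ranks_above_def
    by (auto simp: to_a to_b) (metis to_a to_b length_map nth_map order.strict_trans)+
qed

lemma linorders_iff: "r \<in> linorders m \<longleftrightarrow> distinct r \<and> set r = {..<m}"
  by (auto simp: linorders_def permutations_of_set_def)

lemma transpose_linorders: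
  assumes "r \<in> linorders m" "a < m" "b < m"
  shows "map (transpose a b) r \<in> linorders m"
  using assms by (auto simp: linorders_iff distinct_map transpose_image_eq)

text \<open>Exactly half of all rankings put a above b: the swap of a and b is a
  bijection between the two halves.\<close>
lemma card_rankings_above_eq:
  assumes "a < m" "b < m" "a \<noteq> b"
  shows "card {r \<in> linorders m. \<not> ranks_above r a b} = card {r \<in> linorders m. ranks_above r a b}"
proof -
  have flips: "ranks_above (map (transpose a b) r) a b \<longleftrightarrow> \<not> ranks_above r a b"
    if "r \<in> linorders m" for r
    using that assms ranks_above_transpose[of a b r] ranks_above_flip[of r a b]
    by (auto simp: linorders_iff)
  have involutive: "map (transpose a b) (map (transpose a b) r) = r" for r
    by (simp add: map_idI)
  have "bij_betw (map (transpose a b))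
          {r \<in> linorders m. \<not> ranks_above r a b} {r \<in> linorders m. ranks_above r a b}"
    by (rule bij_betw_byWitness[where f' = "map (transpose a b)"])
       (use involutive flips transpose_linorders assms in auto)
  then show ?thesis
    by (rule bij_betw_same_card)
qed

section \<open>Decomposing the profiles by their a,b-pattern\<close>

definition pattern_class :: "nat \<Rightarrow> nat \<Rightarrow> nat \<Rightarrow> nat \<Rightarrow> (nat \<Rightarrow> bool) \<Rightarrow> (nat \<Rightarrow> nat list) set" where
  "pattern_class n m a b z = {x \<in> profiles n m. pairvec n x a b = z}"

definition winner_count :: "nat \<Rightarrow> nat \<Rightarrow> ((nat \<Rightarrow> nat list) \<Rightarrow> nat) \<Rightarrow> nat \<Rightarrow> nat
    \<Rightarrow> (nat \<Rightarrow> bool) \<Rightarrow> nat \<Rightarrow> nat" where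
  "winner_count n m F a b z c = card {x \<in> pattern_class n m a b z. F x = c}"

definition patterns :: "nat \<Rightarrow> nat \<Rightarrow> nat \<Rightarrow> nat \<Rightarrow> (nat \<Rightarrow> bool) set" where
  "patterns n m a b = (\<lambda>x. pairvec n x a b) ` profiles n m"

lemma winner_count_eq:
  "winner_count n m F a b z c = card {x \<in> profiles n m. pairvec n x a b = z \<and> F x = c}"
  unfolding winner_count_def pattern_class_def by (simp add: conj_assoc)

lemma finite_profiles: "finite (profiles n m)"
  by (simp add: profiles_def linorders_def finite_PiE)

lemma profiles_nonempty: "profiles n m \<noteq> {}"
proof -
  have "linorders m \<noteq> {}"
    unfolding linorders_def by (simp add: permutations_of_set_empty_iff)
  then show ?thesis
    by (simp add: profiles_def PiE_eq_empty_iff)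
qed

text \<open>Every pattern class is a product of the sets of rankings with the
  prescribed a,b-preference, each of size c; hence all classes have size c^n.\<close>
lemma card_pattern_class:
  assumes "z \<in> patterns n m a b" "a < m" "b < m" "a \<noteq> b"
  shows "card (pattern_class n m a b z) = card {r \<in> linorders m. ranks_above r a b} ^ n"
proof -
  let ?S = "\<lambda>t. {r \<in> linorders m. ranks_above r a b = t}"
  obtain x where x: "x \<in> profiles n m" and z: "z = pairvec n x a b"
    using assms(1) by (auto simp: patterns_def)
  have "pattern_class n m a b z = PiE {..<n} (\<lambda>i. ?S (ranks_above (x i) a b))"
    using x unfolding z pattern_class_def profiles_def pairvec_def
    by (auto simp: PiE_iff fun_eq_iff extensional_def)
  moreover have "card (?S t) = card (?S True)" for t
    using card_rankings_above_eq[OF assms(2-4)] by (cases t) simp_all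
  ultimately show ?thesis
    by (simp add: card_PiE)
qed

lemma class_size_pos:
  assumes "a < m" "b < m" "a \<noteq> b"
  shows "card {r \<in> linorders m. ranks_above r a b} ^ n > 0"
proof -
  obtain x where x: "x \<in> profiles n m"
    using profiles_nonempty by blast
  then have "pairvec n x a b \<in> patterns n m a b" "x \<in> pattern_class n m a b (pairvec n x a b)"
    by (simp_all add: patterns_def pattern_class_def)
  moreover have "finite (pattern_class n m a b (pairvec n x a b))"
    using finite_profiles by (simp add: pattern_class_def)
  ultimately show ?thesis
    using card_pattern_class[OF _ assms] by (metis card_gt_0_iff empty_iff)
qed

lemma card_profiles:
  assumes "a < m" "b < m" "a \<noteq> b"
  shows "card (profiles n m) = card (patterns n m a b) * card {r \<in> linorders m. ranks_above r a b} ^ n"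
proof -
  have "card (profiles n m) = (\<Sum>z\<in>patterns n m a b. card (pattern_class n m a b z))"
    using card_filter_by_fibres[OF finite_profiles, where Q = "\<lambda>_. True" and f = "\<lambda>x. pairvec n x a b"]
    by (simp add: patterns_def pattern_class_def)
  then show ?thesis
    by (simp add: card_pattern_class[OF _ assms])
qed

text \<open>The derived GSWF compares the winner counts of the pattern class,
  falling back on voter v; in particular it is constant on each class.\<close>
lemma GSWF_by_winner_count:
  assumes "x \<in> profiles n m" "v < n" "a < m" "b < m" "a \<noteq> b"
  defines "z \<equiv> pairvec n x a b"
  shows "GSWF n m v F a b x \<longleftrightarrow>
           winner_count n m F a b z b < winner_count n m F a b z a
         \<or> (winner_count n m F a b z a = winner_count n m F a b z b \<and> z v)"
proof -
  define K where "K = card {r \<in> linorders m. ranks_above r a b} ^ n"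
  have K: "real K > 0"
    using class_size_pos[OF assms(3-5)] by (simp add: K_def)
  have "z \<in> patterns n m a b"
    using assms(1) by (simp add: patterns_def z_def)
  then have "card (pattern_class n m a b z) = K"
    using card_pattern_class[OF _ assms(3-5)] by (simp add: K_def)
  then have "cond_prob n m F a b x c = real (winner_count n m F a b z c) / real K" for c
    by (simp add: cond_prob_def winner_count_eq pattern_class_def z_def)
  moreover have "z v = ranks_above (x v) a b"
    using assms(2) by (simp add: z_def pairvec_def)
  ultimately show ?thesis
    using K by (auto simp: GSWF_def divide_less_cancel)
qed

text \<open>Inside each pattern class the event counted by N^{a,b} consists of the
  profiles electing the loser of the comparison, i.e. min (A z) (B z) many.\<close>
lemma card_N_event:
  assumes "v < n" "a < m" "b < m" "a \<noteq> b"
  shows "card {x \<in> profiles n m. (F x = a \<and> \<not> GSWF n m v F a b x) \<or> (F x = b \<and> GSWF n m v F a b x)}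
       = (\<Sum>z\<in>patterns n m a b. min (winner_count n m F a b z a) (winner_count n m F a b z b))"
proof -
  let ?pv = "\<lambda>x. pairvec n x a b"
  let ?E = "\<lambda>x. (F x = a \<and> \<not> GSWF n m v F a b x) \<or> (F x = b \<and> GSWF n m v F a b x)"
  have class_count: "card {x \<in> profiles n m. ?pv x = z \<and> ?E x}
      = min (winner_count n m F a b z a) (winner_count n m F a b z b)" for z
  proof -
    define g where "g \<longleftrightarrow> winner_count n m F a b z b < winner_count n m F a b z a
      \<or> (winner_count n m F a b z a = winner_count n m F a b z b \<and> z v)"
    have "{x \<in> profiles n m. ?pv x = z \<and> ?E x}
        = {x \<in> pattern_class n m a b z. F x = (if g then b else a)}"
      using GSWF_by_winner_count[OF _ assms, of _ F] assms(4)
      by (auto simp: pattern_class_def g_def)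
    then show ?thesis
      by (auto simp: winner_count_def g_def min_def)
  qed
  show ?thesis
    unfolding card_filter_by_fibres[OF finite_profiles, where Q = ?E and f = ?pv]
      patterns_def class_count ..
qed

text \<open>Pairs counted by M^{a,b} share their pattern class, so each class z
  contributes A z * B z pairs.\<close>
lemma card_M_pairs:
  "card {(x, x'). x \<in> profiles n m \<and> x' \<in> profiles n m \<and>
                 pairvec n x a b = pairvec n x' a b \<and> F x = a \<and> F x' = b}
   = (\<Sum>z\<in>patterns n m a b. winner_count n m F a b z a * winner_count n m F a b z b)"
  unfolding winner_count_eq patterns_def
  by (rule card_pairs_in_common_fibre[OF finite_profiles])

lemma card_M_space:
  assumes "a < m" "b < m" "a \<noteq> b"
  shows "card {(x, x'). x \<in> profiles n m \<and> x' \<in> profiles n m \<and> pairvec n x a b = pairvec n x' a b}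
       = card (patterns n m a b) * card {r \<in> linorders m. ranks_above r a b} ^ n
           * card {r \<in> linorders m. ranks_above r a b} ^ n"
proof -
  have "card {(x, x'). x \<in> profiles n m \<and> x' \<in> profiles n m \<and> pairvec n x a b = pairvec n x' a b}
      = (\<Sum>z\<in>patterns n m a b. card (pattern_class n m a b z) * card (pattern_class n m a b z))"
    using card_pairs_in_common_fibre[OF finite_profiles,
        where f = "\<lambda>x. pairvec n x a b" and p = "\<lambda>_. True" and q = "\<lambda>_. True"]
    by (simp add: patterns_def pattern_class_def)
  then show ?thesis
    by (simp add: card_pattern_class[OF _ assms])
qed

theorem proposition4p6:
  fixes n m v a b :: nat and F :: "(nat \<Rightarrow> nat list) \<Rightarrow> nat"
  assumes "m \<ge> 3"
    and "v < n"
    and "\<forall>x \<in> profiles n m. F x < m"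
    and "a < m" and "b < m" and "a \<noteq> b"
  shows "M_ab n m F a b \<ge> (N_ab n m v F a b) ^ 2"
proof -
  define Z where "Z = real (card (patterns n m a b))"
  define K where "K = real (card {r \<in> linorders m. ranks_above r a b} ^ n)"
  define s where "s = (\<Sum>z\<in>patterns n m a b. real (min (winner_count n m F a b z a) (winner_count n m F a b z b)))"
  define p where "p = (\<Sum>z\<in>patterns n m a b. real (winner_count n m F a b z a * winner_count n m F a b z b))"
  have N: "N_ab n m v F a b = s / (Z * K)"
    using card_N_event[OF assms(2,4-6), of F] card_profiles[OF assms(4-6), of n]
    by (simp add: N_ab_def s_def Z_def K_def)
  have M: "M_ab n m F a b = p / (Z * K * K)"
    using card_M_pairs[of n m a b F] card_M_space[OF assms(4-6), of n]
    by (simp add: M_ab_def p_def Z_def K_def)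
  have "Z > 0" "K > 0"
    using finite_profiles profiles_nonempty class_size_pos[OF assms(4-6), of n]
    by (auto simp: Z_def K_def patterns_def card_gt_0_iff)
  moreover have "s\<^sup>2 \<le> Z * p"
    unfolding s_def p_def Z_def by (rule sum_min_squared_le)
  ultimately have "(s / (Z * K))\<^sup>2 \<le> p / (Z * K * K)"
    by (simp add: power2_eq_square field_simps)
  then show ?thesis
    unfolding N M .
qed

end
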